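(* Assume (A1) and let $\zeta\in\{\mu,\nu\}$. Then for every probability measure $\mathfrak p$ on $\mathbb R^d$ with $\mathcal H(\mathfrak p|\zeta)<\infty$, $$M_1(\mathfrak p)\le M_1(\zeta)+C_1(\zeta)\sqrt{\mathcal H(\mathfrak p|\zeta)},\qquad M_2(\mathfrak p)\le M_2(\zeta)+C_2(\zeta)\Big(\sqrt{\mathcal H(\mathfrak p|\zeta)}+\frac{\mathcal H(\mathfrak p|\zeta)}{2}\Big),$$ where $$C_1(\zeta):=\inf_{\sigma\in(0,\alpha_\zeta/2)}\Big(\frac2\sigma+\frac2\sigma\log\int e^{\sigma|x|^2}d\zeta\Big)^{1/2},\qquad C_2(\zeta):=\inf_{\sigma\in(0,\alpha_\zeta/2)}\Big(\frac3\sigma+\frac2\sigma\int e^{\sigma|x|^2}d\zeta\Big).$$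
   Context: $M_k(\zeta):=\int|x|^k\zeta(dx)$; $\mathcal H(\mathfrak p|\zeta)$ is the relative entropy. For differentiable $U:\mathbb R^d\to\mathbb R$ and $r>0$, $\kappa_U(r):=\inf\{\langle\nabla U(x)-\nabla U(y),x-y\rangle/|x-y|^2: |x-y|=r\}$. $\mathcal G$: the set of $g\in C^2((0,\infty),[0,\infty))$ with $r\mapsto r^{1/2}g(r^{1/2})$ non-decreasing and concave and $\lim_{r\downarrow0}rg(r)=0$; $\tilde{\mathcal G}$: bounded $g\in\mathcal G$ with $\lim_{r\downarrow0}g(r)=0$, $g'\ge0$, $2g''+gg'\le0$. (A1): $\mu(dx)=e^{-U_\mu(x)}dx$, $\nu(dx)=e^{-U_\nu(x)}dx$ probability measures on $\mathbb R^d$, $U_\mu,U_\nu\in C^2(\mathbb R^d)$, $\int\log(d\mu/dx)d\mu<\infty$, $\int\log(d\nu/dx)d\nu<\infty$, and there exist $\alpha_\mu,\alpha_\nu>0$, $\tilde g_\mu,\tilde g_\nu\in\tilde{\mathcal G}$ with $\kappa_{U_\mu}(r)\ge\alpha_\mu-r^{-1}\tilde g_\mu(r)$ and $\kappa_{U_\nu}(r)\ge\alpha_\nu-r^{-1}\tilde g_\nu(r)$ for all $r>0$. *)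

theory Defs
  imports "HOL-Probability.Probability"
begin

definition moment :: "nat \<Rightarrow> 'a::euclidean_space measure \<Rightarrow> ennreal" where
  "moment k \<zeta> = (\<integral>\<^sup>+ x. ennreal (norm x ^ k) \<partial>\<zeta>)"

definition rel_entropy :: "'a measure \<Rightarrow> 'a measure \<Rightarrow> ereal" where
  "rel_entropy p \<zeta> =
     (if absolutely_continuous \<zeta> p \<and> integrable p (\<lambda>x. ln (enn2real (RN_deriv \<zeta> p x)))
      then ereal (\<integral> x. ln (enn2real (RN_deriv \<zeta> p x)) \<partial>p) else \<infinity>)"

definition C2_with_grad :: "('a::euclidean_space \<Rightarrow> real) \<Rightarrow> ('a \<Rightarrow> 'a) \<Rightarrow> bool" where
  "C2_with_grad U gradU \<longleftrightarrow>
     (\<forall>x. (U has_derivative (\<lambda>h. gradU x \<bullet> h)) (at x)) \<and>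
     (\<exists>D2 :: 'a \<Rightarrow> ('a \<Rightarrow>\<^sub>L 'a). (\<forall>x. (gradU has_derivative blinfun_apply (D2 x)) (at x))
        \<and> continuous_on UNIV D2)"

definition kappa :: "('a::euclidean_space \<Rightarrow> 'a) \<Rightarrow> real \<Rightarrow> ereal" where
  "kappa gradU r = (INF xy \<in> {(x, y). norm (x - y) = r}.
      ereal (((gradU (fst xy) - gradU (snd xy)) \<bullet> (fst xy - snd xy)) / (norm (fst xy - snd xy))^2))"

definition class_G :: "(real \<Rightarrow> real) \<Rightarrow> bool" where
  "class_G g \<longleftrightarrow>
     (\<exists>g1 g2. (\<forall>r>0. (g has_real_derivative g1 r) (at r) \<and> (g1 has_real_derivative g2 r) (at r))
        \<and> continuous_on {0<..} g2) \<and>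
     (\<forall>r>0. g r \<ge> 0) \<and>
     mono_on {0<..} (\<lambda>r. sqrt r * g (sqrt r)) \<and>
     concave_on {0<..} (\<lambda>r. sqrt r * g (sqrt r)) \<and>
     ((\<lambda>r. r * g r) \<longlongrightarrow> 0) (at_right 0)"

definition class_G_tilde :: "(real \<Rightarrow> real) \<Rightarrow> bool" where
  "class_G_tilde g \<longleftrightarrow>
     class_G g \<and> bounded (g ` {0<..}) \<and> (g \<longlongrightarrow> 0) (at_right 0) \<and>
     (\<forall>r>0. deriv g r \<ge> 0 \<and> 2 * deriv (deriv g) r + g r * deriv g r \<le> 0)"

definition A1_measure :: "'a::euclidean_space measure \<Rightarrow> ('a \<Rightarrow> real) \<Rightarrow> real \<Rightarrow> bool" where
  "A1_measure \<zeta> U \<alpha> \<longleftrightarrow>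
     \<zeta> = density lborel (\<lambda>x. ennreal (exp (- U x))) \<and> prob_space \<zeta> \<and>
     (\<exists>gradU. C2_with_grad U gradU \<and>
        (\<exists>g. class_G_tilde g \<and> (\<forall>r>0. ereal (\<alpha> - g r / r) \<le> kappa gradU r))) \<and>
     (\<integral>\<^sup>+ x. ennreal (- U x) \<partial>\<zeta>) < \<infinity> \<and> \<alpha> > 0"

definition exp_moment :: "'a::euclidean_space measure \<Rightarrow> real \<Rightarrow> ennreal" where
  "exp_moment \<zeta> \<sigma> = (\<integral>\<^sup>+ x. ennreal (exp (\<sigma> * (norm x)^2)) \<partial>\<zeta>)"

definition C1 :: "'a::euclidean_space measure \<Rightarrow> real \<Rightarrow> ennreal" where
  "C1 \<zeta> \<alpha> = (INF \<sigma> \<in> {0<..<\<alpha>/2}.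
      (if exp_moment \<zeta> \<sigma> = \<infinity> then \<infinity>
       else ennreal (sqrt (2/\<sigma> + 2/\<sigma> * ln (enn2real (exp_moment \<zeta> \<sigma>))))))"

definition C2 :: "'a::euclidean_space measure \<Rightarrow> real \<Rightarrow> ennreal" where
  "C2 \<zeta> \<alpha> = (INF \<sigma> \<in> {0<..<\<alpha>/2}. ennreal (3/\<sigma>) + ennreal (2/\<sigma>) * exp_moment \<zeta> \<sigma>)"

end

theory Submission
  imports Defs
begin

(* Write p = h zeta and Ent = integral of h ln h.  For a bounded function 0 <= phi, the Gibbs
   variational inequality  integral of h f <= Ent + ln (integral of exp f)  controls the deviation
   integral of h phi - integral of phi  by exponential moments of phi.  For the first moment it is
   applied to f = l phi together with Young's inequality l phi <= l^2/(4 sigma) + sigma phi^2, and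
   combined with the pointwise Pinsker inequality 3 (x - 1)^2 <= 2 (x + 2) (x ln x - x + 1); for the
   second moment it is applied to f = l sigma phi together with
   exp (l psi) <= 1 + l psi + 4 l^2 exp psi  (0 <= l <= 1/2).  Optimising over the free parameter
   gives the bounds for a fixed sigma; truncating |x|^k at level N and monotone convergence remove
   the boundedness, and the infimum over sigma is taken last. *)

lemma mult_le_xlnx_add_exp:
  fixes x y :: real
  assumes "0 \<le> x"
  shows "x * y \<le> x * ln x - x + exp y"
proof (cases "x = 0")
  case False
  then have "x > 0" using assms by simp
  have "1 + (y - ln x) \<le> exp (y - ln x)" by (rule exp_ge_add_one_self)
  also have "\<dots> = exp y / x" using \<open>x > 0\<close> by (simp add: exp_diff)
  finally show ?thesis using \<open>x > 0\<close> by (simp add: field_simps)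
qed simp

lemma mono_on_add_one_mult_ln_sub:
  "mono_on {0<..} (\<lambda>z::real. (z + 1) * ln z - 2 * (z - 1))"
proof (rule mono_onI)
  fix a b :: real
  assume ab: "a \<in> {0<..}" "a \<le> b"
  show "(a + 1) * ln a - 2 * (a - 1) \<le> (b + 1) * ln b - 2 * (b - 1)"
  proof (rule deriv_nonneg_imp_mono[where g = "\<lambda>z. (z + 1) * ln z - 2 * (z - 1)"
        and g' = "\<lambda>z. ln z + 1 / z - 1"])
    fix z assume "z \<in> {a..b}"
    with ab have "z > 0" by simp
    then show "((\<lambda>z. (z + 1) * ln z - 2 * (z - 1)) has_real_derivative ln z + 1 / z - 1) (at z)"
      by (auto intro!: derivative_eq_intros simp: field_simps)
    show "ln z + 1 / z - 1 \<ge> 0"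
      using ln_le_minus_one[of "1 / z"] \<open>z > 0\<close> by (simp add: ln_div)
  qed (fact ab)
qed

lemma sq_sub_one_le_xlnx:
  fixes x :: real
  assumes "0 \<le> x"
  shows "3 * (x - 1)^2 \<le> 2 * (x + 2) * (x * ln x - x + 1)"
proof -
  define G where "G = (\<lambda>z::real. (z + 1) * ln z - 2 * (z - 1))"
  define F where "F = (\<lambda>z::real. 2 * (z + 2) * (z * ln z - z + 1) - 3 * (z - 1)^2)"
  have F': "(F has_real_derivative 4 * G z) (at z)" if "z > 0" for z
    unfolding F_def G_def using that
    by (auto intro!: derivative_eq_intros simp: field_simps power2_eq_square)
  have "G 1 = 0" "F 1 = 0" "F 0 = 1"
    by (simp_all add: G_def F_def)
  have G_nonneg: "0 \<le> G z" if "1 \<le> z" for z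
    using mono_onD[OF mono_on_add_one_mult_ln_sub, of 1 z] that \<open>G 1 = 0\<close> unfolding G_def by simp
  have G_nonpos: "G z \<le> 0" if "0 < z" "z \<le> 1" for z
    using mono_onD[OF mono_on_add_one_mult_ln_sub, of z 1] that \<open>G 1 = 0\<close> unfolding G_def by simp
  have "F 1 \<le> F x"
  proof (cases "1 \<le> x")
    case True
    show ?thesis
    proof (rule DERIV_nonneg_imp_nondecreasing[of 1 x F, OF True])
      fix z :: real assume "1 \<le> z" "z \<le> x"
      then show "\<exists>D. (F has_real_derivative D) (at z) \<and> 0 \<le> D"
        using F'[of z] G_nonneg[of z] by (intro exI[of _ "4 * G z"]) simp
    qed
  next
    case False
    show ?thesis
    proof (cases "x = 0")
      case True
      then show ?thesis using \<open>F 1 = 0\<close> \<open>F 0 = 1\<close> by simp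
    next
      case False
      with assms have "0 < x" by simp
      show ?thesis
      proof (rule DERIV_nonpos_imp_nonincreasing[of x 1 F])
        show "x \<le> 1" using \<open>\<not> 1 \<le> x\<close> by simp
        fix z :: real assume "x \<le> z" "z \<le> 1"
        then show "\<exists>D. (F has_real_derivative D) (at z) \<and> D \<le> 0"
          using F'[of z] G_nonpos[of z] \<open>0 < x\<close> by (intro exI[of _ "4 * G z"]) simp
      qed
    qed
  qed
  then show ?thesis unfolding F_def by simp
qed

lemma mult_sub_one_le_xlnx:
  fixes x \<psi> t :: real
  assumes "0 \<le> x" and "t > 0"
  shows "\<psi> * (x - 1) \<le> t * (x * ln x - x + 1) + \<psi>^2 * (x + 2) / (6 * t)"
proof -
  define g where "g = x * ln x - x + 1"
  define w where "w = x + 2"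
  have "w > 0" unfolding w_def using assms by simp
  have "3 * (x - 1)^2 \<le> 2 * w * g"
    unfolding g_def w_def by (rule sq_sub_one_le_xlnx[OF assms(1)])
  then have "3 * t^2 * (3 * (x - 1)^2) \<le> 3 * t^2 * (2 * w * g)"
    by (rule mult_left_mono) simp
  then have "9 * t^2 * (x - 1)^2 \<le> 3 * t^2 * (2 * w * g)"
    by simp
  moreover have "6 * t * w * (\<psi> * (x - 1)) \<le> 9 * t^2 * (x - 1)^2 + \<psi>^2 * w^2"
    using zero_le_power2[of "3 * t * (x - 1) - \<psi> * w"]
    by (simp add: power2_eq_square algebra_simps)
  moreover have "6 * t * w * (t * g + \<psi>^2 * w / (6 * t)) = 3 * t^2 * (2 * w * g) + \<psi>^2 * w^2"
    using assms(2) by (simp add: field_simps power2_eq_square)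
  ultimately have "6 * t * w * (\<psi> * (x - 1)) \<le> 6 * t * w * (t * g + \<psi>^2 * w / (6 * t))"
    by linarith
  then show ?thesis
    using \<open>w > 0\<close> assms(2) unfolding g_def w_def by (simp add: mult_le_cancel_left_pos)
qed

lemma exp_le_quadratic_Taylor:
  fixes y :: real
  assumes "0 \<le> y"
  shows "exp y \<le> 1 + y + y^2 * exp y / 2"
proof -
  obtain t where t: "\<bar>t\<bar> \<le> \<bar>y\<bar>" "exp y = (\<Sum>m<2. y ^ m / fact m) + exp t / fact 2 * y ^ 2"
    using Maclaurin_exp_le[of y 2] by blast
  have "exp y = 1 + y + exp t / 2 * y^2"
    using t(2) by (simp add: numeral_2_eq_2)
  moreover have "exp t / 2 * y^2 \<le> y^2 * exp y / 2"
    using t(1) assms by (simp add: mult.commute mult_right_mono)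
  ultimately show ?thesis by linarith
qed

lemma exp_mult_le_quadratic:
  fixes \<psi> l :: real
  assumes "0 \<le> \<psi>" "0 \<le> l" "l \<le> 1/2"
  shows "exp (l * \<psi>) \<le> 1 + l * \<psi> + 4 * l^2 * exp \<psi>"
proof -
  have "\<psi>^2 \<le> 8 * exp (\<psi> / 2)"
    using exp_lower_Taylor_quadratic[of "\<psi> / 2"] assms by (simp add: power_divide)
  moreover have "l * \<psi> \<le> 1/2 * \<psi>"
    using assms by (intro mult_right_mono) auto
  then have "exp (l * \<psi>) \<le> exp (\<psi> / 2)"
    by simp
  ultimately have "\<psi>^2 * exp (l * \<psi>) \<le> 8 * exp (\<psi> / 2) * exp (\<psi> / 2)"
    by (intro mult_mono) auto
  then have "(l * \<psi>)^2 * exp (l * \<psi>) / 2 \<le> l^2 * (8 * exp (\<psi> / 2) * exp (\<psi> / 2)) / 2"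
    unfolding power_mult_distrib mult.assoc by (intro divide_right_mono mult_left_mono) auto
  also have "\<dots> = 4 * l^2 * exp \<psi>"
    by (simp flip: exp_add)
  finally show ?thesis
    using exp_le_quadratic_Taylor[of "l * \<psi>"] assms by simp
qed

lemma le_two_sqrt_mult_if_le_linear_plus_inverse:
  fixes X a b :: real
  assumes "a > 0" "b > 0"
    and "\<And>l. 0 < l \<Longrightarrow> l^2 \<le> b / a \<Longrightarrow> X \<le> a * l + b / l"
  shows "X \<le> 2 * sqrt (a * b)"
proof -
  define l where "l = sqrt (b / a)"
  have "l > 0" "l^2 = b / a" unfolding l_def using assms by auto
  have "sqrt (a * b) = sqrt (b / a * a^2)"
    using assms(1) by (simp add: power2_eq_square)
  also have "\<dots> = l * sqrt (a^2)"
    unfolding l_def by (rule real_sqrt_mult)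
  also have "\<dots> = a * l"
    using assms(1) by simp
  finally have "a * l = sqrt (a * b)" ..
  moreover have "b / l = a * l"
    using \<open>l > 0\<close> \<open>l^2 = b / a\<close> assms(1) by (simp add: field_simps power2_eq_square)
  ultimately show ?thesis
    using assms(3)[OF \<open>l > 0\<close>] \<open>l^2 = b / a\<close> by simp
qed

lemma optimise_first_moment_bounds:
  fixes X m H L \<sigma> :: real
  assumes "\<sigma> > 0" "H > 0" "L \<ge> 0" "m \<ge> 0"
    and Young: "\<And>l. l > 0 \<Longrightarrow> X \<le> (H + L) / l + l / (4 * \<sigma>)"
    and Pinsker: "\<And>t. t > 0 \<Longrightarrow> X - m \<le> t * H + (H + 3 * L) / (6 * \<sigma> * t)"
  shows "X - m \<le> sqrt (2 / \<sigma> + 2 / \<sigma> * L) * sqrt H"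
proof -
  have target: "sqrt (2 / \<sigma> + 2 / \<sigma> * L) * sqrt H = sqrt ((2 + 2 * L) * H / \<sigma>)"
    unfolding real_sqrt_mult[symmetric]
    by (rule arg_cong[where f = sqrt]) (use assms(1) in \<open>simp add: field_simps\<close>)
  show ?thesis
  proof (cases "H \<le> 3")
    case True
    have "X - m \<le> 2 * sqrt (H * ((H + 3 * L) / (6 * \<sigma>)))"
      using assms(1-3) Pinsker by (intro le_two_sqrt_mult_if_le_linear_plus_inverse) (auto simp: field_simps)
    also have "\<dots> = sqrt (4 * (H * ((H + 3 * L) / (6 * \<sigma>))))"
      by (simp only: real_sqrt_mult[of 4] real_sqrt_four)
    also have "\<dots> \<le> sqrt ((2 + 2 * L) * H / \<sigma>)"
      using True assms(1-3) by (intro real_sqrt_le_mono) (simp add: field_simps)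
    finally show ?thesis unfolding target .
  next
    case False
    have "X \<le> 2 * sqrt (1 / (4 * \<sigma>) * (H + L))"
      using assms(1-3) Young by (intro le_two_sqrt_mult_if_le_linear_plus_inverse) (auto simp: field_simps)
    also have "\<dots> = sqrt ((H + L) / \<sigma>)"
      by (simp add: real_sqrt_mult real_sqrt_divide)
    also have "\<dots> \<le> sqrt ((2 + 2 * L) * H / \<sigma>)"
    proof (intro real_sqrt_le_mono divide_right_mono)
      have "1 * L \<le> (2 * H) * L"
        using False assms(3) by (intro mult_right_mono) auto
      then show "H + L \<le> (2 + 2 * L) * H"
        using False by (simp add: algebra_simps)
    qed (use assms(1) in simp)
    finally show ?thesis unfolding target using assms(4) by linarith
  qed
qed

lemma optimise_second_moment_bounds:
  fixes X m H E :: real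
  assumes "H > 0" "m \<ge> 0" "E \<ge> 1"
    and quadratic: "\<And>l. 0 < l \<Longrightarrow> l \<le> 1/2 \<Longrightarrow> l * X \<le> H + l * m + 4 * l^2 * E"
    and log: "X \<le> H + ln E"
  shows "X - m \<le> (3 + 2 * E) * (sqrt H + H / 2)"
proof (cases "H \<le> E")
  case True
  have "X - m \<le> 2 * sqrt (4 * E * H)"
  proof (rule le_two_sqrt_mult_if_le_linear_plus_inverse)
    fix l :: real assume "0 < l" "l^2 \<le> H / (4 * E)"
    then have "l^2 * (4 * E) \<le> H"
      using assms(3) by (simp add: pos_le_divide_eq)
    then have "(4 * l^2) * E \<le> 1 * E"
      using True by (simp add: mult_ac)
    then have "l^2 \<le> (1/2)^2"
      using assms(3) by (simp add: mult_right_le_imp_le power_divide)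
    then have "l \<le> 1/2"
      using \<open>0 < l\<close> by (simp add: power_mono_iff)
    then have "l * (X - m) \<le> l * (4 * E * l + H / l)"
      using quadratic[OF \<open>0 < l\<close>] \<open>0 < l\<close> by (simp add: algebra_simps power2_eq_square)
    then show "X - m \<le> 4 * E * l + H / l"
      using \<open>0 < l\<close> by simp
  qed (use assms in auto)
  also have "\<dots> = 4 * sqrt E * sqrt H"
    by (simp add: real_sqrt_mult)
  also have "\<dots> \<le> (3 + 2 * E) * sqrt H"
  proof (rule mult_right_mono)
    have "0 \<le> 2 * (sqrt E - 1)^2 + 1" by simp
    then show "4 * sqrt E \<le> 3 + 2 * E"
      using assms(3) by (simp add: power2_eq_square algebra_simps)
  qed (use assms in simp)
  also have "\<dots> \<le> (3 + 2 * E) * (sqrt H + H / 2)"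
    using assms by (intro mult_left_mono) auto
  finally show ?thesis .
next
  case False
  have "1 \<le> sqrt H"
    using False assms(3) by simp
  then have "E \<le> E * sqrt H"
    using assms(3) by (simp add: mult_le_cancel_left1)
  have "X - m \<le> H + E"
    using log ln_le_minus_one[of E] assms by simp
  also have "\<dots> \<le> 3 * (H / 2) + 2 * E * sqrt H"
    using \<open>E \<le> E * sqrt H\<close> assms by linarith
  also have "\<dots> \<le> (3 + 2 * E) * (sqrt H + H / 2)"
    using assms by (simp add: algebra_simps)
  finally show ?thesis .
qed

lemma SUP_ennreal_min_of_nat: "(SUP N::nat. ennreal (min x (real N))) = ennreal x"
proof (rule antisym)
  have "min x (real (nat \<lceil>x\<rceil>)) = x"
    by (simp add: min_def) linarith
  then show "ennreal x \<le> (SUP N. ennreal (min x (real N)))"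
    by (metis (mono_tags) SUP_upper UNIV_I)
qed (rule SUP_least, simp add: ennreal_leI)

lemma integrable_mult_bounded:
  fixes h f :: "'a \<Rightarrow> real"
  assumes "integrable M h" "f \<in> borel_measurable M" "\<And>x. \<bar>f x\<bar> \<le> B"
  shows "integrable M (\<lambda>x. h x * f x)"
proof (rule Bochner_Integration.integrable_bound)
  show "integrable M (\<lambda>x. B * h x)" using assms(1) by simp
  show "(\<lambda>x. h x * f x) \<in> borel_measurable M"
    using assms(1,2) by measurable
  have "\<bar>f x\<bar> \<le> \<bar>B\<bar>" for x
    using assms(3)[of x] by linarith
  then show "AE x in M. norm (h x * f x) \<le> norm (B * h x)"
    by (intro AE_I2) (simp add: abs_mult mult.commute mult_right_mono)
qed

lemma (in finite_measure) integrable_bounded: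
  fixes f :: "'a \<Rightarrow> real"
  assumes "f \<in> borel_measurable M" "\<And>x. \<bar>f x\<bar> \<le> B"
  shows "integrable M f"
  using assms by (intro integrable_const_bound[where B = B]) auto

locale finite_entropy_density = prob_space M for M :: "'a measure" +
  fixes h :: "'a \<Rightarrow> real"
  assumes h_measurable [measurable]: "h \<in> borel_measurable M"
    and h_nonneg: "\<And>x. 0 \<le> h x"
    and h_integrable: "integrable M h"
    and h_integral: "(\<integral>x. h x \<partial>M) = 1"
    and h_ln_h_integrable: "integrable M (\<lambda>x. h x * ln (h x))"
begin

definition Ent :: real where
  "Ent = (\<integral>x. h x * ln (h x) \<partial>M)"

lemma integrable_h_mult_bounded:
  fixes f :: "'a \<Rightarrow> real"
  assumes "f \<in> borel_measurable M" "\<And>x. \<bar>f x\<bar> \<le> B"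
  shows "integrable M (\<lambda>x. h x * f x)"
  using h_integrable assms by (rule integrable_mult_bounded)

lemma integral_xlnx_sub_one: "(\<integral>x. h x * ln (h x) - h x + 1 \<partial>M) = Ent"
  using h_ln_h_integrable h_integrable unfolding Ent_def by (simp add: h_integral prob_space)

lemma Ent_nonneg: "Ent \<ge> 0"
proof -
  have "0 \<le> (\<integral>x. h x * ln (h x) - h x + 1 \<partial>M)"
    by (rule Bochner_Integration.integral_nonneg) (use mult_le_xlnx_add_exp[OF h_nonneg, of _ 0] in simp)
  then show ?thesis by (simp add: integral_xlnx_sub_one)
qed

lemma AE_h_eq_1_if_Ent_eq_0:
  assumes "Ent = 0"
  shows "AE x in M. h x = 1"
proof -
  have "AE x in M. h x * ln (h x) - h x + 1 = 0"
    using mult_le_xlnx_add_exp[OF h_nonneg, of _ 0] h_ln_h_integrable h_integrable assms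
    by (subst integral_nonneg_eq_0_iff_AE[symmetric]) (auto simp: integral_xlnx_sub_one)
  then show ?thesis
  proof (rule eventually_mono)
    fix x assume "h x * ln (h x) - h x + 1 = 0"
    then have "3 * (h x - 1)^2 \<le> 0"
      using sq_sub_one_le_xlnx[OF h_nonneg[of x]] by simp
    then show "h x = 1" by simp
  qed
qed

lemma integral_h_mult_le_Ent_add_ln:
  fixes f :: "'a \<Rightarrow> real"
  assumes [measurable]: "f \<in> borel_measurable M" and bounded: "\<And>x. \<bar>f x\<bar> \<le> B"
    and "Z > 0" and exp_le: "(\<integral>x. exp (f x) \<partial>M) \<le> Z"
  shows "(\<integral>x. h x * f x \<partial>M) \<le> Ent + ln Z"
proof -
  have "f x \<le> B" for x
    using bounded[of x] by linarith
  then have int_exp: "integrable M (\<lambda>x. exp (f x))"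
    by (intro integrable_bounded[where B = "exp B"]) auto
  have int_f: "integrable M (\<lambda>x. h x * f x)"
    using bounded by (rule integrable_h_mult_bounded[rotated]) simp
  have "(\<integral>x. h x * f x \<partial>M) - ln Z = (\<integral>x. h x * (f x - ln Z) \<partial>M)"
    using int_f h_integrable by (simp add: right_diff_distrib h_integral)
  also have "\<dots> \<le> (\<integral>x. h x * ln (h x) - h x + exp (f x) / Z \<partial>M)"
  proof (rule integral_mono)
    show "h x * (f x - ln Z) \<le> h x * ln (h x) - h x + exp (f x) / Z" for x
      using mult_le_xlnx_add_exp[OF h_nonneg[of x], of "f x - ln Z"] \<open>Z > 0\<close>
      by (simp add: exp_diff)
  qed (use int_f h_integrable h_ln_h_integrable int_exp in \<open>auto simp: right_diff_distrib\<close>)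
  also have "\<dots> = Ent - 1 + (\<integral>x. exp (f x) \<partial>M) / Z"
    using h_ln_h_integrable h_integrable int_exp unfolding Ent_def by (simp add: h_integral)
  also have "\<dots> \<le> Ent"
    using exp_le \<open>Z > 0\<close> by simp
  finally show ?thesis by simp
qed

end

lemma (in prob_space) one_le_integral_exp:
  fixes f :: "'a \<Rightarrow> real"
  assumes "integrable M (\<lambda>x. exp (f x))" "\<And>x. 0 \<le> f x"
  shows "1 \<le> (\<integral>x. exp (f x) \<partial>M)"
proof -
  have "(\<integral>x. 1 \<partial>M) \<le> (\<integral>x. exp (f x) \<partial>M)"
    using assms by (intro integral_mono) auto
  then show ?thesis by (simp add: prob_space)
qed

lemma (in prob_space) integral_le_ln:
  fixes f :: "'a \<Rightarrow> real"
  assumes "f \<in> borel_measurable M" "\<And>x. \<bar>f x\<bar> \<le> B"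
    and "Z > 0" "(\<integral>x. exp (f x) \<partial>M) \<le> Z"
  shows "(\<integral>x. f x \<partial>M) \<le> ln Z"
proof -
  interpret uniform: finite_entropy_density M "\<lambda>_. 1"
    by unfold_locales (auto simp: prob_space)
  have "uniform.Ent = 0"
    unfolding uniform.Ent_def by simp
  then show ?thesis
    using uniform.integral_h_mult_le_Ent_add_ln[OF assms] by simp
qed

context finite_entropy_density
begin

lemma deviation_le_Ent_add_second_moments:
  fixes \<phi> :: "'a \<Rightarrow> real"
  assumes [measurable]: "\<phi> \<in> borel_measurable M"
    and bounds: "\<And>x. 0 \<le> \<phi> x" "\<And>x. \<phi> x \<le> N" and "t > 0"
  shows "(\<integral>x. h x * \<phi> x \<partial>M) - (\<integral>x. \<phi> x \<partial>M)
           \<le> t * Ent + ((\<integral>x. h x * \<phi> x ^ 2 \<partial>M) + 2 * (\<integral>x. \<phi> x ^ 2 \<partial>M)) / (6 * t)"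
proof -
  have abs_bounds: "\<bar>\<phi> x\<bar> \<le> N" "\<bar>\<phi> x ^ 2\<bar> \<le> N^2" for x
    using bounds[of x] by (auto intro: power_mono)
  have integrable: "integrable M \<phi>" "integrable M (\<lambda>x. \<phi> x ^ 2)"
    "integrable M (\<lambda>x. h x * \<phi> x)" "integrable M (\<lambda>x. h x * \<phi> x ^ 2)"
    by (rule integrable_bounded integrable_h_mult_bounded, measurable, rule abs_bounds)+
  have "(\<integral>x. h x * \<phi> x - \<phi> x \<partial>M) \<le>
        (\<integral>x. t * (h x * ln (h x) - h x + 1) + (h x * \<phi> x ^ 2 + 2 * \<phi> x ^ 2) / (6 * t) \<partial>M)"
  proof (rule integral_mono)
    show "h x * \<phi> x - \<phi> x \<le> t * (h x * ln (h x) - h x + 1) + (h x * \<phi> x ^ 2 + 2 * \<phi> x ^ 2) / (6 * t)"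
      for x using mult_sub_one_le_xlnx[OF h_nonneg[of x] \<open>t > 0\<close>, of "\<phi> x"]
      by (simp add: algebra_simps add_divide_distrib)
  qed (use integrable h_integrable h_ln_h_integrable in auto)
  also have "\<dots> = t * Ent + ((\<integral>x. h x * \<phi> x ^ 2 \<partial>M) + 2 * (\<integral>x. \<phi> x ^ 2 \<partial>M)) / (6 * t)"
    using integrable h_integrable h_ln_h_integrable
    by (simp add: integral_xlnx_sub_one[symmetric])
  finally show ?thesis
    using integrable by simp
qed

lemma scaled_integral_h_mult_le_Young:
  fixes \<phi> :: "'a \<Rightarrow> real"
  assumes [measurable]: "\<phi> \<in> borel_measurable M"
    and bounds: "\<And>x. 0 \<le> \<phi> x" "\<And>x. \<phi> x \<le> N"
    and "\<sigma> > 0" "l > 0" and exp_le: "(\<integral>x. exp (\<sigma> * \<phi> x ^ 2) \<partial>M) \<le> E"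
  shows "l * (\<integral>x. h x * \<phi> x \<partial>M) \<le> Ent + ln E + l^2 / (4 * \<sigma>)"
proof -
  have "\<sigma> * \<phi> x ^ 2 \<le> \<sigma> * N^2" for x
    using bounds[of x] \<open>\<sigma> > 0\<close> by (auto intro: mult_left_mono power_mono)
  then have int_exp: "integrable M (\<lambda>x. exp (\<sigma> * \<phi> x ^ 2))"
    by (intro integrable_bounded[where B = "exp (\<sigma> * N^2)"]) auto
  have "E \<ge> 1"
    using one_le_integral_exp[OF int_exp] exp_le \<open>\<sigma> > 0\<close> by simp
  have Young: "exp (l * \<phi> x) \<le> exp (l^2 / (4 * \<sigma>)) * exp (\<sigma> * \<phi> x ^ 2)" for x
  proof -
    have "0 \<le> (2 * \<sigma> * \<phi> x - l)^2" by simp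
    then have "l * \<phi> x \<le> l^2 / (4 * \<sigma>) + \<sigma> * \<phi> x ^ 2"
      using \<open>\<sigma> > 0\<close> by (simp add: field_simps power2_eq_square)
    then show ?thesis by (simp flip: exp_add)
  qed
  have "integrable M (\<lambda>x. exp (l * \<phi> x))"
    using bounds(2) \<open>l > 0\<close> by (intro integrable_bounded[where B = "exp (l * N)"]) (auto intro: mult_left_mono)
  then have "(\<integral>x. exp (l * \<phi> x) \<partial>M) \<le> (\<integral>x. exp (l^2 / (4 * \<sigma>)) * exp (\<sigma> * \<phi> x ^ 2) \<partial>M)"
    using int_exp Young by (intro integral_mono) auto
  also have "\<dots> \<le> exp (l^2 / (4 * \<sigma>)) * E"
    using exp_le by simp
  finally have "(\<integral>x. h x * (l * \<phi> x) \<partial>M) \<le> Ent + ln (exp (l^2 / (4 * \<sigma>)) * E)"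
    using bounds \<open>l > 0\<close> \<open>E \<ge> 1\<close>
    by (intro integral_h_mult_le_Ent_add_ln[where B = "l * N"]) (auto simp: abs_mult intro: mult_left_mono)
  then show ?thesis
    using \<open>E \<ge> 1\<close> by (simp add: ln_mult mult.left_commute)
qed

lemma bounded_deviation_le_sqrt_Ent:
  fixes \<phi> :: "'a \<Rightarrow> real"
  assumes [measurable]: "\<phi> \<in> borel_measurable M"
    and bounds: "\<And>x. 0 \<le> \<phi> x" "\<And>x. \<phi> x \<le> N"
    and "\<sigma> > 0" "Ent > 0" and exp_le: "(\<integral>x. exp (\<sigma> * \<phi> x ^ 2) \<partial>M) \<le> E"
  shows "(\<integral>x. h x * \<phi> x \<partial>M) - (\<integral>x. \<phi> x \<partial>M) \<le> sqrt (2 / \<sigma> + 2 / \<sigma> * ln E) * sqrt Ent"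
proof -
  have abs_bound: "\<bar>\<sigma> * \<phi> x ^ 2\<bar> \<le> \<sigma> * N^2" for x
    using bounds[of x] \<open>\<sigma> > 0\<close> by (auto intro: mult_left_mono power_mono)
  then have "integrable M (\<lambda>x. exp (\<sigma> * \<phi> x ^ 2))"
    by (intro integrable_bounded[where B = "exp (\<sigma> * N^2)"]) (auto simp: abs_le_iff)
  then have "E \<ge> 1"
    using one_le_integral_exp[of "\<lambda>x. \<sigma> * \<phi> x ^ 2"] exp_le \<open>\<sigma> > 0\<close> by simp
  show ?thesis
  proof (rule optimise_first_moment_bounds)
    fix l :: real assume "l > 0"
    have "(Ent + ln E) / l + l / (4 * \<sigma>) = (Ent + ln E + l^2 / (4 * \<sigma>)) / l"
      using \<open>l > 0\<close> by (simp add: field_simps power2_eq_square)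
    then show "(\<integral>x. h x * \<phi> x \<partial>M) \<le> (Ent + ln E) / l + l / (4 * \<sigma>)"
      using scaled_integral_h_mult_le_Young[OF _ bounds \<open>\<sigma> > 0\<close> \<open>l > 0\<close> exp_le] \<open>l > 0\<close>
      by (simp add: pos_le_divide_eq mult.commute)
  next
    fix t :: real assume "t > 0"
    have "(\<integral>x. h x * (\<sigma> * \<phi> x ^ 2) \<partial>M) \<le> Ent + ln E"
      using abs_bound exp_le \<open>E \<ge> 1\<close> by (intro integral_h_mult_le_Ent_add_ln) auto
    moreover have "(\<integral>x. \<sigma> * \<phi> x ^ 2 \<partial>M) \<le> ln E"
      using abs_bound exp_le \<open>E \<ge> 1\<close> by (intro integral_le_ln) auto
    ultimately have "(\<integral>x. h x * \<phi> x ^ 2 \<partial>M) + 2 * (\<integral>x. \<phi> x ^ 2 \<partial>M) \<le> (Ent + 3 * ln E) / \<sigma>"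
      using \<open>\<sigma> > 0\<close> by (simp add: field_simps)
    then have "((\<integral>x. h x * \<phi> x ^ 2 \<partial>M) + 2 * (\<integral>x. \<phi> x ^ 2 \<partial>M)) / (6 * t)
        \<le> (Ent + 3 * ln E) / \<sigma> / (6 * t)"
      using \<open>t > 0\<close> by (intro divide_right_mono) simp_all
    then show "(\<integral>x. h x * \<phi> x \<partial>M) - (\<integral>x. \<phi> x \<partial>M) \<le> t * Ent + (Ent + 3 * ln E) / (6 * \<sigma> * t)"
      using deviation_le_Ent_add_second_moments[where \<phi> = \<phi>, OF _ bounds \<open>t > 0\<close>] by (simp add: mult_ac)
  qed (use \<open>\<sigma> > 0\<close> \<open>Ent > 0\<close> \<open>E \<ge> 1\<close> bounds in auto)
qed

lemma scaled_integral_h_mult_le_quadratic: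
  fixes \<psi> :: "'a \<Rightarrow> real"
  assumes [measurable]: "\<psi> \<in> borel_measurable M"
    and bounds: "\<And>x. 0 \<le> \<psi> x" "\<And>x. \<psi> x \<le> N"
    and "0 < l" "l \<le> 1/2" and exp_le: "(\<integral>x. exp (\<psi> x) \<partial>M) \<le> E"
  shows "l * (\<integral>x. h x * \<psi> x \<partial>M) \<le> Ent + l * (\<integral>x. \<psi> x \<partial>M) + 4 * l^2 * E"
proof -
  have int: "integrable M \<psi>" "integrable M (\<lambda>x. exp (\<psi> x))"
    using bounds by (intro integrable_bounded[where B = N], simp_all,
      intro integrable_bounded[where B = "exp N"], simp_all)
  have "0 \<le> l * (\<integral>x. \<psi> x \<partial>M)" "0 \<le> 4 * l^2 * E"
    using one_le_integral_exp[OF int(2)] exp_le bounds \<open>0 < l\<close> by simp_all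
  then have Z_pos: "0 < 1 + l * (\<integral>x. \<psi> x \<partial>M) + 4 * l^2 * E"
    by linarith
  have "integrable M (\<lambda>x. exp (l * \<psi> x))"
    using bounds \<open>0 < l\<close> by (intro integrable_bounded[where B = "exp (l * N)"]) (auto intro: mult_left_mono)
  then have "(\<integral>x. exp (l * \<psi> x) \<partial>M) \<le> (\<integral>x. 1 + l * \<psi> x + 4 * l^2 * exp (\<psi> x) \<partial>M)"
    using int exp_mult_le_quadratic[OF bounds(1)] assms(4,5) by (intro integral_mono) auto
  also have "\<dots> \<le> 1 + l * (\<integral>x. \<psi> x \<partial>M) + 4 * l^2 * E"
    using int exp_le by (simp add: prob_space mult_left_mono)
  finally have "(\<integral>x. h x * (l * \<psi> x) \<partial>M) \<le> Ent + ln (1 + l * (\<integral>x. \<psi> x \<partial>M) + 4 * l^2 * E)"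
    using bounds \<open>0 < l\<close> Z_pos
    by (intro integral_h_mult_le_Ent_add_ln[where B = "l * N"]) (auto simp: abs_mult intro: mult_left_mono)
  then show ?thesis
    using ln_le_minus_one[OF Z_pos] by (simp add: mult.left_commute)
qed

lemma bounded_deviation_le_sqrt_Ent_add_Ent:
  fixes \<phi> :: "'a \<Rightarrow> real"
  assumes [measurable]: "\<phi> \<in> borel_measurable M"
    and bounds: "\<And>x. 0 \<le> \<phi> x" "\<And>x. \<phi> x \<le> N"
    and "\<sigma> > 0" "Ent > 0" and exp_le: "(\<integral>x. exp (\<sigma> * \<phi> x) \<partial>M) \<le> E"
  shows "(\<integral>x. h x * \<phi> x \<partial>M) - (\<integral>x. \<phi> x \<partial>M) \<le> (3 / \<sigma> + 2 / \<sigma> * E) * (sqrt Ent + Ent / 2)"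
proof -
  have \<sigma>\<phi>_bounds: "0 \<le> \<sigma> * \<phi> x" "\<sigma> * \<phi> x \<le> \<sigma> * N" for x
    using bounds[of x] \<open>\<sigma> > 0\<close> by (auto intro: mult_left_mono)
  then have "integrable M (\<lambda>x. exp (\<sigma> * \<phi> x))"
    by (intro integrable_bounded[where B = "exp (\<sigma> * N)"]) auto
  then have "E \<ge> 1"
    using one_le_integral_exp[of "\<lambda>x. \<sigma> * \<phi> x"] exp_le \<sigma>\<phi>_bounds by simp
  have "(\<integral>x. h x * (\<sigma> * \<phi> x) \<partial>M) - (\<integral>x. \<sigma> * \<phi> x \<partial>M) \<le> (3 + 2 * E) * (sqrt Ent + Ent / 2)"
  proof (rule optimise_second_moment_bounds)
    show "l * (\<integral>x. h x * (\<sigma> * \<phi> x) \<partial>M) \<le> Ent + l * (\<integral>x. \<sigma> * \<phi> x \<partial>M) + 4 * l^2 * E"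
      if "0 < l" "l \<le> 1/2" for l
      using that exp_le by (intro scaled_integral_h_mult_le_quadratic[OF _ \<sigma>\<phi>_bounds]) auto
    show "(\<integral>x. h x * (\<sigma> * \<phi> x) \<partial>M) \<le> Ent + ln E"
      using \<sigma>\<phi>_bounds exp_le \<open>E \<ge> 1\<close>
      by (intro integral_h_mult_le_Ent_add_ln[where B = "\<sigma> * N"]) (auto simp: abs_le_iff)
    show "0 \<le> (\<integral>x. \<sigma> * \<phi> x \<partial>M)"
      using \<sigma>\<phi>_bounds(1) by (rule Bochner_Integration.integral_nonneg)
  qed (use \<open>Ent > 0\<close> \<open>E \<ge> 1\<close> in auto)
  moreover have "(\<integral>x. h x * (\<sigma> * \<phi> x) \<partial>M) - (\<integral>x. \<sigma> * \<phi> x \<partial>M)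
      = \<sigma> * ((\<integral>x. h x * \<phi> x \<partial>M) - (\<integral>x. \<phi> x \<partial>M))"
    by (simp add: algebra_simps)
  moreover have "(3 + 2 * E) * (sqrt Ent + Ent / 2) = \<sigma> * ((3 / \<sigma> + 2 / \<sigma> * E) * (sqrt Ent + Ent / 2))"
    using \<open>\<sigma> > 0\<close> by (simp add: field_simps)
  ultimately show ?thesis
    using \<open>\<sigma> > 0\<close> by simp
qed

lemma nn_integral_h_mult_le_of_truncations:
  fixes g :: "'a \<Rightarrow> real"
  assumes [measurable]: "g \<in> borel_measurable M" and g_nonneg: "\<And>x. 0 \<le> g x"
    and truncated: "\<And>N::nat. (\<integral>x. h x * min (g x) N \<partial>M) - (\<integral>x. min (g x) N \<partial>M) \<le> R"
  shows "(\<integral>\<^sup>+x. ennreal (h x) * ennreal (g x) \<partial>M) \<le> (\<integral>\<^sup>+x. ennreal (g x) \<partial>M) + ennreal R"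
proof -
  have "R \<ge> 0"
    using truncated[of 0] g_nonneg by (simp add: min_absorb2)
  define f where "f = (\<lambda>(N::nat) x. ennreal (h x) * ennreal (min (g x) (real N)))"
  have truncated_le: "integral\<^sup>N M (f N) \<le> (\<integral>\<^sup>+x. ennreal (g x) \<partial>M) + ennreal R" for N
  proof -
    have bounds: "\<bar>min (g x) (real N)\<bar> \<le> N" for x
      using g_nonneg[of x] by simp
    have int: "integrable M (\<lambda>x. min (g x) (real N))" "integrable M (\<lambda>x. h x * min (g x) (real N))"
      by (rule integrable_bounded integrable_h_mult_bounded, measurable, rule bounds)+
    have "integral\<^sup>N M (f N) = ennreal (\<integral>x. h x * min (g x) N \<partial>M)"
      unfolding f_def using int(2) h_nonneg g_nonneg
      by (subst nn_integral_eq_integral[symmetric]) (auto simp: ennreal_mult)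
    also have "\<dots> \<le> ennreal ((\<integral>x. min (g x) N \<partial>M) + R)"
      using truncated[of N] by (intro ennreal_leI) simp
    also have "\<dots> = ennreal (\<integral>x. min (g x) N \<partial>M) + ennreal R"
      using \<open>R \<ge> 0\<close> g_nonneg by (intro ennreal_plus) auto
    also have "ennreal (\<integral>x. min (g x) N \<partial>M) = (\<integral>\<^sup>+x. ennreal (min (g x) N) \<partial>M)"
      using int(1) g_nonneg by (intro nn_integral_eq_integral[symmetric]) auto
    also have "\<dots> \<le> (\<integral>\<^sup>+x. ennreal (g x) \<partial>M)"
      by (intro nn_integral_mono ennreal_leI) simp
    finally show ?thesis by (simp add: add_right_mono)
  qed
  have SUP_f: "(SUP N. f N x) = ennreal (h x) * ennreal (g x)" for x
    unfolding f_def by (simp add: SUP_mult_left_ennreal[symmetric] SUP_ennreal_min_of_nat)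
  have "incseq f"
    unfolding f_def by (auto simp: incseq_def le_fun_def intro!: mult_left_mono ennreal_leI)
  then have "(\<integral>\<^sup>+x. (SUP N. f N x) \<partial>M) = (SUP N. integral\<^sup>N M (f N))"
    by (rule nn_integral_monotone_convergence_SUP) (unfold f_def, measurable)
  also have "\<dots> \<le> (\<integral>\<^sup>+x. ennreal (g x) \<partial>M) + ennreal R"
    by (rule SUP_least) (rule truncated_le)
  finally show ?thesis
    by (simp add: SUP_f)
qed

end

locale finite_entropy_density_borel =
  finite_entropy_density M h for M :: "'a::euclidean_space measure" and h +
  assumes sets_M [measurable_cong]: "sets M = sets borel"
begin

lemma moment_density: "moment k (density M h) = (\<integral>\<^sup>+x. ennreal (h x) * ennreal (norm x ^ k) \<partial>M)"
  unfolding moment_def by (simp add: nn_integral_density)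

lemma moment_density_eq_if_Ent_eq_0:
  assumes "Ent = 0"
  shows "moment k (density M h) = moment k M"
  unfolding moment_density unfolding moment_def
  using AE_h_eq_1_if_Ent_eq_0[OF assms] by (intro nn_integral_cong_AE) auto

lemma integral_exp_le_exp_moment:
  fixes f :: "'a \<Rightarrow> real"
  assumes [measurable]: "f \<in> borel_measurable M"
    and "\<And>x. f x \<le> B" "\<And>x. f x \<le> \<sigma> * (norm x)^2" "exp_moment M \<sigma> \<noteq> \<infinity>"
  shows "(\<integral>x. exp (f x) \<partial>M) \<le> enn2real (exp_moment M \<sigma>)"
proof -
  have "(\<integral>x. exp (f x) \<partial>M) = enn2real (\<integral>\<^sup>+x. ennreal (exp (f x)) \<partial>M)"
    by (rule integral_eq_nn_integral) auto
  also have "\<dots> \<le> enn2real (exp_moment M \<sigma>)"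
    unfolding exp_moment_def using assms(3,4)
    by (intro enn2real_mono nn_integral_mono ennreal_leI) (auto simp: exp_moment_def less_top)
  finally show ?thesis .
qed

lemma first_moment_density_le:
  assumes "\<sigma> > 0" "Ent > 0" and finite: "exp_moment M \<sigma> \<noteq> \<infinity>"
  shows "moment 1 (density M h) \<le> moment 1 M +
    ennreal (sqrt (2 / \<sigma> + 2 / \<sigma> * ln (enn2real (exp_moment M \<sigma>)))) * ennreal (sqrt Ent)"
proof -
  define c where "c = sqrt (2 / \<sigma> + 2 / \<sigma> * ln (enn2real (exp_moment M \<sigma>)))"
  have "(\<integral>\<^sup>+x. ennreal (h x) * ennreal (norm x) \<partial>M) \<le> (\<integral>\<^sup>+x. ennreal (norm x) \<partial>M) + ennreal (c * sqrt Ent)"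
  proof (rule nn_integral_h_mult_le_of_truncations)
    fix N :: nat
    have "(\<integral>x. exp (\<sigma> * (min (norm x) N)^2) \<partial>M) \<le> enn2real (exp_moment M \<sigma>)"
      using \<open>\<sigma> > 0\<close> finite
      by (intro integral_exp_le_exp_moment[where B = "\<sigma> * N^2"]) (auto intro: mult_left_mono power_mono)
    then show "(\<integral>x. h x * min (norm x) N \<partial>M) - (\<integral>x. min (norm x) N \<partial>M) \<le> c * sqrt Ent"
      unfolding c_def using assms by (intro bounded_deviation_le_sqrt_Ent[where N = N]) auto
  qed auto
  then show ?thesis
    unfolding moment_density unfolding moment_def c_def using Ent_nonneg by (simp add: ennreal_mult'')
qed

lemma second_moment_density_le:
  assumes "\<sigma> > 0" "Ent > 0" and finite: "exp_moment M \<sigma> \<noteq> \<infinity>"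
  shows "moment 2 (density M h) \<le> moment 2 M +
    ennreal ((3 / \<sigma> + 2 / \<sigma> * enn2real (exp_moment M \<sigma>)) * (sqrt Ent + Ent / 2))"
  unfolding moment_density unfolding moment_def
proof (rule nn_integral_h_mult_le_of_truncations)
  fix N :: nat
  have "(\<integral>x. exp (\<sigma> * min ((norm x)^2) N) \<partial>M) \<le> enn2real (exp_moment M \<sigma>)"
    using \<open>\<sigma> > 0\<close> finite
    by (intro integral_exp_le_exp_moment[where B = "\<sigma> * N"]) (auto intro: mult_left_mono)
  then show "(\<integral>x. h x * min ((norm x)^2) N \<partial>M) - (\<integral>x. min ((norm x)^2) N \<partial>M)
      \<le> (3 / \<sigma> + 2 / \<sigma> * enn2real (exp_moment M \<sigma>)) * (sqrt Ent + Ent / 2)"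
    using assms by (intro bounded_deviation_le_sqrt_Ent_add_Ent[where N = N]) auto
qed (use assms Ent_nonneg in auto)

end

lemma le_add_INF_mult:
  fixes c :: "real \<Rightarrow> ennreal" and a b :: ennreal
  assumes "S \<noteq> {}" and "\<And>\<sigma>. \<sigma> \<in> S \<Longrightarrow> a \<le> b + c \<sigma> * ennreal d"
  shows "a \<le> b + (INF \<sigma>\<in>S. c \<sigma>) * ennreal d"
proof -
  define g where "g y = b + ennreal d * y" for y
  have "mono g"
    unfolding g_def by (auto intro!: monoI add_left_mono mult_left_mono)
  moreover have "continuous_on UNIV g"
    unfolding g_def by (intro continuous_intros ennreal_continuous_on_cmult) auto
  ultimately have "(INF \<sigma>\<in>S. g (c \<sigma>)) = g (INF \<sigma>\<in>S. c \<sigma>)"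
    using assms(1) by (subst continuous_at_Inf_mono)
      (auto simp: continuous_on_eq_continuous_within continuous_at_imp_continuous_at_within image_comp)
  moreover have "a \<le> (INF \<sigma>\<in>S. g (c \<sigma>))"
    using assms(2) unfolding g_def by (intro INF_greatest) (simp add: mult.commute)
  ultimately show ?thesis
    unfolding g_def by (simp add: mult.commute)
qed

context finite_entropy_density_borel
begin

lemma first_moment_density_le_C1:
  assumes "\<alpha> > 0" "Ent > 0"
  shows "moment 1 (density M h) \<le> moment 1 M + C1 M \<alpha> * ennreal (sqrt Ent)"
  unfolding C1_def
proof (rule le_add_INF_mult)
  show "{0<..<\<alpha> / 2} \<noteq> {}"
    using \<open>\<alpha> > 0\<close> by (auto intro!: exI[of _ "\<alpha> / 4"])
  fix \<sigma> :: real assume "\<sigma> \<in> {0<..<\<alpha> / 2}"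
  then show "moment 1 (density M h) \<le> moment 1 M + (if exp_moment M \<sigma> = \<infinity> then \<infinity>
      else ennreal (sqrt (2 / \<sigma> + 2 / \<sigma> * ln (enn2real (exp_moment M \<sigma>))))) * ennreal (sqrt Ent)"
    using first_moment_density_le[of \<sigma>] \<open>Ent > 0\<close> by (simp add: ennreal_top_mult)
qed

lemma second_moment_density_le_C2:
  assumes "\<alpha> > 0" "Ent > 0"
  shows "moment 2 (density M h) \<le> moment 2 M + C2 M \<alpha> * ennreal (sqrt Ent + Ent / 2)"
  unfolding C2_def
proof (rule le_add_INF_mult)
  show "{0<..<\<alpha> / 2} \<noteq> {}"
    using \<open>\<alpha> > 0\<close> by (auto intro!: exI[of _ "\<alpha> / 4"])
  fix \<sigma> :: real assume "\<sigma> \<in> {0<..<\<alpha> / 2}"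
  then have "\<sigma> > 0" by simp
  show "moment 2 (density M h) \<le> moment 2 M +
      (ennreal (3 / \<sigma>) + ennreal (2 / \<sigma>) * exp_moment M \<sigma>) * ennreal (sqrt Ent + Ent / 2)"
  proof (cases "exp_moment M \<sigma> = \<infinity>")
    case False
    then obtain E where E: "exp_moment M \<sigma> = ennreal E" "E \<ge> 0"
      by (cases "exp_moment M \<sigma>") auto
    have "ennreal ((3 / \<sigma> + 2 / \<sigma> * E) * (sqrt Ent + Ent / 2))
        = (ennreal (3 / \<sigma>) + ennreal (2 / \<sigma>) * ennreal E) * ennreal (sqrt Ent + Ent / 2)"
    proof -
      have "0 \<le> 2 / \<sigma>" "0 \<le> 3 / \<sigma>" "0 \<le> 2 / \<sigma> * E" "0 \<le> sqrt Ent + Ent / 2"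
        using \<open>\<sigma> > 0\<close> E(2) Ent_nonneg by simp_all
      then show ?thesis
        using E(2) by (simp add: ennreal_mult[symmetric] ennreal_plus[symmetric] del: ennreal_plus)
    qed
    then show ?thesis
      using second_moment_density_le[OF \<open>\<sigma> > 0\<close> \<open>Ent > 0\<close> False] E by simp
  qed (use \<open>\<sigma> > 0\<close> \<open>Ent > 0\<close> in \<open>simp add: ennreal_mult_top ennreal_top_mult add_pos_pos\<close>)
qed

end

lemma finite_rel_entropy_density:
  fixes p \<zeta> :: "'a measure"
  assumes "prob_space \<zeta>" "prob_space p" "sets p = sets \<zeta>" "rel_entropy p \<zeta> < \<infinity>"
  obtains h where "finite_entropy_density \<zeta> h" "p = density \<zeta> (\<lambda>x. ennreal (h x))"
    "real_of_ereal (rel_entropy p \<zeta>) = finite_entropy_density.Ent \<zeta> h"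
proof -
  interpret \<zeta>: prob_space \<zeta> by fact
  interpret p: prob_space p by fact
  have ac: "absolutely_continuous \<zeta> p"
    and ln_integrable: "integrable p (\<lambda>x. ln (enn2real (RN_deriv \<zeta> p x)))"
    and rel_entropy: "rel_entropy p \<zeta> = ereal (\<integral>x. ln (enn2real (RN_deriv \<zeta> p x)) \<partial>p)"
    using assms(4) unfolding rel_entropy_def by (auto split: if_splits)
  define h where "h x = enn2real (RN_deriv \<zeta> p x)" for x
  have [measurable]: "h \<in> borel_measurable \<zeta>"
    unfolding h_def by measurable
  have "AE x in \<zeta>. RN_deriv \<zeta> p x \<noteq> \<infinity>"
    using \<zeta>.RN_deriv_finite[OF p.sigma_finite_measure_axioms ac assms(3)] .
  then have "density \<zeta> (RN_deriv \<zeta> p) = density \<zeta> (\<lambda>x. ennreal (h x))"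
    unfolding h_def by (intro density_cong) (auto simp: less_top)
  then have p: "p = density \<zeta> (\<lambda>x. ennreal (h x))"
    using \<zeta>.density_RN_deriv[OF ac assms(3)] by simp
  have integrable_p: "integrable p f \<longleftrightarrow> integrable \<zeta> (\<lambda>x. h x * f x)"
    and integral_p: "(\<integral>x. f x \<partial>p) = (\<integral>x. h x * f x \<partial>\<zeta>)"
    if "f \<in> borel_measurable \<zeta>" for f :: "'a \<Rightarrow> real"
    using that unfolding p by (simp_all add: integrable_real_density integral_real_density h_def)
  have "finite_entropy_density \<zeta> h"
  proof
    show "integrable \<zeta> h" "(\<integral>x. h x \<partial>\<zeta>) = 1"
      using integrable_p[of "\<lambda>_. 1"] integral_p[of "\<lambda>_. 1"] p.prob_space by simp_all
    show "integrable \<zeta> (\<lambda>x. h x * ln (h x))"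
      using integrable_p ln_integrable unfolding h_def by simp
  qed (auto simp: h_def)
  moreover have "real_of_ereal (rel_entropy p \<zeta>) = finite_entropy_density.Ent \<zeta> h"
    unfolding rel_entropy finite_entropy_density.Ent_def[OF \<open>finite_entropy_density \<zeta> h\<close>]
    using integral_p[of "\<lambda>x. ln (h x)"] unfolding h_def by simp
  ultimately show ?thesis
    using p that by blast
qed

theorem lemma27:
  fixes \<mu> \<nu> \<zeta> :: "'a::euclidean_space measure"
    and U\<^sub>\<mu> U\<^sub>\<nu> :: "'a \<Rightarrow> real" and \<alpha>\<^sub>\<mu> \<alpha>\<^sub>\<nu> \<alpha> :: real
    and p :: "'a measure"
  assumes "A1_measure \<mu> U\<^sub>\<mu> \<alpha>\<^sub>\<mu>" and "A1_measure \<nu> U\<^sub>\<nu> \<alpha>\<^sub>\<nu>"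
    and "(\<zeta>, \<alpha>) \<in> {(\<mu>, \<alpha>\<^sub>\<mu>), (\<nu>, \<alpha>\<^sub>\<nu>)}"
    and "prob_space p" and "sets p = sets borel"
    and "rel_entropy p \<zeta> < \<infinity>"
  shows "moment 1 p \<le> moment 1 \<zeta> + C1 \<zeta> \<alpha> * ennreal (sqrt (real_of_ereal (rel_entropy p \<zeta>))) \<and>
         moment 2 p \<le> moment 2 \<zeta> + C2 \<zeta> \<alpha> *
           ennreal (sqrt (real_of_ereal (rel_entropy p \<zeta>)) + real_of_ereal (rel_entropy p \<zeta>) / 2)"
proof -
  obtain U where "A1_measure \<zeta> U \<alpha>"
    using assms(1-3) by auto
  then have \<zeta>: "\<zeta> = density lborel (\<lambda>x. ennreal (exp (- U x)))" "prob_space \<zeta>" "\<alpha> > 0"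
    unfolding A1_measure_def by auto
  then have "sets \<zeta> = sets borel"
    by simp
  with assms(4-6) \<zeta>(2) obtain h where h: "finite_entropy_density \<zeta> h"
    and p: "p = density \<zeta> (\<lambda>x. ennreal (h x))"
    and H: "real_of_ereal (rel_entropy p \<zeta>) = finite_entropy_density.Ent \<zeta> h"
    by (metis finite_rel_entropy_density)
  interpret finite_entropy_density_borel \<zeta> h
    using h \<open>sets \<zeta> = sets borel\<close>
    by (intro finite_entropy_density_borel.intro finite_entropy_density_borel_axioms.intro)
  show ?thesis
  \<comment> \<open>C1 and C2 may be infinite and \<open>\<infinity> * 0 = 0\<close> in ennreal, so Ent = 0 needs h = 1 a.e.\<close>
  proof (cases "Ent = 0")
    case True
    then show ?thesis
      unfolding H unfolding p by (simp add: moment_density_eq_if_Ent_eq_0)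
  next
    case False
    then show ?thesis
      unfolding H unfolding p
      using Ent_nonneg first_moment_density_le_C1 second_moment_density_le_C2 \<zeta>(3) by simp
  qed
qed

end
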